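(* Let $w$ be an nTL-monomial for $P_n$ with decreasing runs $R_1,\dots,R_k$ (in order of appearance) and peaks $p_1,\dots,p_k$. Then $p_1<p_2<\cdots<p_k$.
   Context: Fix $n\ge 0$. The nil-Temperley-Lieb algebra $A_n$ of the path graph $P_n$ is the unital associative algebra generated by $x_1,\dots,x_n$ subject to the relations $x_i^2=0$; $x_ix_j=x_jx_i$ if $|i-j|>1$; $x_ix_{i+1}x_i=0$ and $x_{i+1}x_ix_{i+1}=0$ for $1\le i<n$. A word is a finite product $x_{i_1}\cdots x_{i_m}$ of generators. Two words are equivalent if one can be obtained from the other by repeatedly swapping adjacent letters $x_ix_j\to x_jx_i$ with $|i-j|>1$. A word is reducible if it equals $0$ in $A_n$. Words of the same length are compared lexicographically by index sequences. An nTL-monomial is a word that is not reducible and lexicographically smallest among all words equivalent to it. A decreasing run is a maximal block of consecutive letters with strictly decreasing indices; the index of its first letter is its peak, and the index of its last letter is its valley. *)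

theory Defs
  imports Main
begin

text \<open>Words in the generators x_1,...,x_n are represented by their index sequences
  (lists of natural numbers in {1..n}).\<close>

definition is_word :: "nat \<Rightarrow> nat list \<Rightarrow> bool" where
  "is_word n w \<longleftrightarrow> (\<forall>i \<in> set w. 1 \<le> i \<and> i \<le> n)"

definition comm_step :: "nat list \<Rightarrow> nat list \<Rightarrow> bool" where
  "comm_step u v \<longleftrightarrow> (\<exists>a b i j. u = a @ [i, j] @ b \<and> v = a @ [j, i] @ b
      \<and> (i + 1 < j \<or> j + 1 < i))"

definition word_equiv :: "nat list \<Rightarrow> nat list \<Rightarrow> bool" where
  "word_equiv u v \<longleftrightarrow> comm_step\<^sup>*\<^sup>* u v"

definition has_relator :: "nat \<Rightarrow> nat list \<Rightarrow> bool" where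
  "has_relator n w \<longleftrightarrow> (\<exists>a b i. (w = a @ [i, i] @ b)
      \<or> (1 \<le> i \<and> i < n \<and> (w = a @ [i, i + 1, i] @ b \<or> w = a @ [i + 1, i, i + 1] @ b)))"

text \<open>Reducible: the word equals 0 in A_n. Since all relations of A_n are either
  monomial (= 0) or commutations, A_n is the contracted monoid algebra of the
  monoid with zero given by the same presentation; a word is 0 there iff some
  word equivalent to it contains a relator as a factor.\<close>
definition reducible :: "nat \<Rightarrow> nat list \<Rightarrow> bool" where
  "reducible n w \<longleftrightarrow> (\<exists>v. word_equiv w v \<and> has_relator n v)"

definition lex_le :: "nat list \<Rightarrow> nat list \<Rightarrow> bool" where
  "lex_le u v \<longleftrightarrow> u = v \<or> (u, v) \<in> lexord {(a, b). a < b}"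

definition nTL_monomial :: "nat \<Rightarrow> nat list \<Rightarrow> bool" where
  "nTL_monomial n w \<longleftrightarrow> is_word n w \<and> \<not> reducible n w
      \<and> (\<forall>v. word_equiv w v \<longrightarrow> lex_le w v)"

fun runs :: "nat list \<Rightarrow> nat list list" where
  "runs [] = []"
| "runs [x] = [[x]]"
| "runs (x # y # xs) =
     (case runs (y # xs) of
        [] \<Rightarrow> [[x]]
      | r # rs \<Rightarrow> (if y < x then (x # r) # rs else [x] # r # rs))"

definition peaks :: "nat list \<Rightarrow> nat list" where
  "peaks w = map hd (runs w)"

definition valleys :: "nat list \<Rightarrow> nat list" where
  "valleys w = map last (runs w)"

end

theory Submission
  imports Defs
begin

text \<open>In an nTL-monomial two adjacent letters i > j with i > j + 1 would commute, and
  swapping them gives a lexicographically smaller equivalent word; so every decreasing run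
  has the form c + k, ..., c + 1, c. By maximality the letter b following the run satisfies
  b \<ge> c. If b = c the word contains x_c x_c. If c < b \<le> c + k, the run contains b, b - 1
  followed only by letters smaller than b - 1, all of which commute with x_b; moving x_b to
  the left produces the relator x_b x_(b-1) x_b. Hence b > c + k, i.e. the next peak exceeds
  the current one.\<close>

lemma word_equiv_move_left:
  assumes "\<forall>c\<in>set r. c + 1 < b"
  shows "word_equiv (p @ r @ [b] @ s) (p @ b # r @ s)"
  using assms
proof (induction r arbitrary: p)
  case Nil
  then show ?case by (simp add: word_equiv_def)
next
  case (Cons c r)
  have "word_equiv ((p @ [c]) @ r @ [b] @ s) ((p @ [c]) @ b # r @ s)"
    using Cons.IH[of "p @ [c]"] Cons.prems by simp
  moreover have "comm_step (p @ [c, b] @ r @ s) (p @ [b, c] @ r @ s)"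
    unfolding comm_step_def using Cons.prems by fastforce
  ultimately show ?case
    unfolding word_equiv_def by (simp add: rtranclp.rtrancl_into_rtrancl)
qed

lemma nTL_monomial_no_square: "\<not> nTL_monomial n (p @ [i, i] @ s)"
  unfolding nTL_monomial_def reducible_def has_relator_def word_equiv_def by blast

lemma nTL_monomial_descent_by_one:
  assumes "nTL_monomial n (p @ [i, j] @ s)" and "j < i"
  shows "i = Suc j"
proof (rule ccontr)
  assume "i \<noteq> Suc j"
  then have "comm_step (p @ [i, j] @ s) (p @ [j, i] @ s)"
    unfolding comm_step_def using assms(2) by fastforce
  then have "lex_le (p @ [i, j] @ s) (p @ [j, i] @ s)"
    using assms(1) unfolding nTL_monomial_def word_equiv_def by blast
  then show False
    using assms(2) unfolding lex_le_def by (simp add: lexord_same_pref_iff)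
qed

lemma nTL_monomial_no_hidden_braid:
  assumes "\<forall>c\<in>set r. c < j"
  shows "\<not> nTL_monomial n (p @ [Suc j, j] @ r @ [Suc j] @ s)"
proof
  let ?w = "p @ [Suc j, j] @ r @ [Suc j] @ s"
  let ?v = "(p @ [Suc j, j]) @ Suc j # r @ s"
  assume mono: "nTL_monomial n ?w"
  then have "1 \<le> j" "j < n"
    unfolding nTL_monomial_def is_word_def by auto
  then have "has_relator n ?v"
    unfolding has_relator_def by (metis Suc_eq_plus1 append.assoc append_Cons append_Nil)
  moreover have "word_equiv ?w ?v"
    using word_equiv_move_left[of r "Suc j" "p @ [Suc j, j]" s] assms by simp
  ultimately show False
    using mono unfolding nTL_monomial_def reducible_def by blast
qed

lemma nTL_monomial_decreasing_hd_less:
  assumes "nTL_monomial n (p @ r @ b # s)" and "r \<noteq> []"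
    and "sorted_wrt (>) r" and "last r \<le> b"
  shows "hd r < b"
  using assms
proof (induction r arbitrary: p)
  case Nil
  then show ?case by simp
next
  case (Cons i r)
  show ?case
  proof (cases r)
    case Nil
    then have "b \<noteq> i"
      using Cons.prems(1) nTL_monomial_no_square[of n p i s] by auto
    then show ?thesis
      using Cons.prems(4) Nil by simp
  next
    case (Cons j r')
    have "nTL_monomial n ((p @ [i]) @ r @ b # s)"
      using Cons.prems(1) by simp
    then have jb: "j < b"
      using Cons.IH Cons.prems(3,4) \<open>r = j # r'\<close> by fastforce
    have i: "i = Suc j"
      using nTL_monomial_descent_by_one[of n p i j "r' @ b # s"] Cons.prems \<open>r = j # r'\<close>
      by simp
    have "\<not> nTL_monomial n (p @ [Suc j, j] @ r' @ [Suc j] @ s)"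
      using nTL_monomial_no_hidden_braid Cons.prems(3) \<open>r = j # r'\<close> by simp
    then have "b \<noteq> Suc j"
      using Cons.prems(1) i \<open>r = j # r'\<close> by auto
    then show ?thesis
      using i jb by simp
  qed
qed

lemma runs_append_decreasing:
  assumes "r \<noteq> []" and "sorted_wrt (>) r" and "rest = [] \<or> last r \<le> hd rest"
  shows "runs (r @ rest) = r # runs rest"
  using assms
proof (induction r rule: induct_list012)
  case (2 x)
  then show ?case
    by (cases rest rule: runs.cases) (auto split: list.split)
next
  case (3 x y r)
  then show ?case by simp
qed simp

lemma decreasing_prefix_exists:
  fixes w :: "nat list"
  assumes "w \<noteq> []"
  shows "\<exists>r rest. w = r @ rest \<and> r \<noteq> [] \<and> sorted_wrt (>) r \<and> (rest = [] \<or> last r \<le> hd rest)"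
  using assms
proof (induction w)
  case Nil
  then show ?case by simp
next
  case (Cons x w)
  show ?case
  proof (cases "w \<noteq> [] \<and> hd w < x")
    case True
    then obtain r rest where r: "w = r @ rest" "r \<noteq> []" "sorted_wrt (>) r"
      "rest = [] \<or> last r \<le> hd rest"
      using Cons.IH by blast
    have "\<forall>c\<in>set r. c < x"
      using r(2,3) True r(1) by (cases r) auto
    then show ?thesis
      using r by (intro exI[of _ "x # r"] exI[of _ rest]) auto
  next
    case False
    then show ?thesis
      by (intro exI[of _ "[x]"] exI[of _ w]) auto
  qed
qed

lemma peaks_hd: "w \<noteq> [] \<Longrightarrow> peaks w = hd w # tl (peaks w)"
  unfolding peaks_def by (induction w rule: runs.induct) (auto split: list.split)

lemma nTL_monomial_suffix_peaks_sorted: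
  "nTL_monomial n (p @ w) \<Longrightarrow> sorted_wrt (<) (peaks w)"
proof (induction "length w" arbitrary: w p rule: less_induct)
  case less
  show ?case
  proof (cases "w = []")
    case True
    then show ?thesis by (simp add: peaks_def)
  next
    case False
    then obtain r rest where r: "w = r @ rest" "r \<noteq> []" "sorted_wrt (>) r"
      "rest = [] \<or> last r \<le> hd rest"
      using decreasing_prefix_exists by blast
    have peaks_w: "peaks w = hd r # peaks rest"
      using runs_append_decreasing[OF r(2-4)] r(1) unfolding peaks_def by simp
    have sorted_rest: "sorted_wrt (<) (peaks rest)"
      using less.hyps[of rest "p @ r"] less.prems r by simp
    have "\<forall>q\<in>set (peaks rest). hd r < q"
    proof (cases rest)
      case Nil
      then show ?thesis by (simp add: peaks_def)
    next
      case (Cons b s)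
      have "hd r < b"
        using nTL_monomial_decreasing_hd_less[of n p r b s] less.prems r Cons by simp
      moreover have "peaks rest = b # tl (peaks rest)"
        using peaks_hd Cons by fastforce
      ultimately show ?thesis
        using sorted_rest by (metis order.strict_trans set_ConsD strict_sorted_simps(2))
    qed
    then show ?thesis
      using peaks_w sorted_rest by simp
  qed
qed

theorem lemma3:
  fixes n :: nat and w :: "nat list"
  assumes "nTL_monomial n w"
  shows "sorted_wrt (<) (peaks w)"
  using nTL_monomial_suffix_peaks_sorted[of n "[]" w] assms by simp

end
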